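(* Let $M$ be the star matrix of a partition of the hypercube ${\bf Z}_q^n$ into subcubes all of the same dimension. Then in every column of $M$ each value $a\in{\bf Z}_q$ occurs the same number of times (entries $*$ are not counted).
   Context: A subcube of ${\bf Z}_q^n$ is obtained by fixing the values of some coordinates and letting the remaining coordinates run through all of ${\bf Z}_q$; its dimension is the number of free coordinates. Its star pattern is the vector of length $n$ over ${\bf Z}_q\cup\{*\}$ with the fixed value in each fixed coordinate and $*$ in each free coordinate. The star matrix of a partition of ${\bf Z}_q^n$ into subcubes (each vector lying in exactly one subcube) is the matrix whose rows are the star patterns of the subcubes of the partition. *)

theory Defs
  imports Main
begin

text \<open>Vectors of Z_q^n are lists of length n with entries in {0..<q}.
A star pattern is a list of length n over (nat option): None stands for *,
Some a for the fixed value a.\<close>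

definition hypercube :: "nat \<Rightarrow> nat \<Rightarrow> nat list set" where
  "hypercube q n = {x. length x = n \<and> (\<forall>i<n. x ! i < q)}"

definition star_pattern :: "nat \<Rightarrow> nat \<Rightarrow> nat option list \<Rightarrow> bool" where
  "star_pattern q n p \<longleftrightarrow> length p = n \<and> (\<forall>i<n. \<forall>a. p ! i = Some a \<longrightarrow> a < q)"

definition subcube :: "nat \<Rightarrow> nat \<Rightarrow> nat option list \<Rightarrow> nat list set" where
  "subcube q n p = {x \<in> hypercube q n. \<forall>i<n. \<forall>a. p ! i = Some a \<longrightarrow> x ! i = a}"

definition subcube_dim :: "nat \<Rightarrow> nat option list \<Rightarrow> nat" where
  "subcube_dim n p = card {i. i < n \<and> p ! i = None}"

definition is_star_matrix_of_partition :: "nat \<Rightarrow> nat \<Rightarrow> nat option list set \<Rightarrow> bool" where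
  "is_star_matrix_of_partition q n P \<longleftrightarrow>
     finite P \<and> (\<forall>p\<in>P. star_pattern q n p) \<and>
     (\<forall>x\<in>hypercube q n. \<exists>!p. p \<in> P \<and> x \<in> subcube q n p)"

end

theory Submission
  imports Defs
begin

text \<open>Count the slice \<open>{x. x ! i = c}\<close> of the hypercube, which has \<open>q ^ (n - 1)\<close>
elements, through the partition. A subcube with \<open>*\<close> in coordinate \<open>i\<close> meets the slice in
\<open>q ^ (d - 1)\<close> vectors whatever \<open>c\<close> is; a subcube with value \<open>c\<close> there lies inside the
slice and contributes \<open>q ^ d\<close>; every other subcube misses it. Hence the number of rows
with value \<open>c\<close> in column \<open>i\<close> does not depend on \<open>c\<close>.\<close>

lemma finite_hypercube: "finite (hypercube q n)"
proof (rule finite_subset[OF _ finite_lists_length_eq[OF finite_lessThan[of q], of n]])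
  show "hypercube q n \<subseteq> {xs. set xs \<subseteq> {..<q} \<and> length xs = n}"
    by (auto simp: hypercube_def in_set_conv_nth)
qed

lemma subcube_subset_hypercube: "subcube q n p \<subseteq> hypercube q n"
  by (auto simp: subcube_def)

lemma subcube_Cons_None:
  "subcube q (Suc n) (None # p) = (\<lambda>(c, x). c # x) ` ({..<q} \<times> subcube q n p)"
proof (rule set_eqI)
  fix x
  show "x \<in> subcube q (Suc n) (None # p) \<longleftrightarrow> x \<in> (\<lambda>(c, x). c # x) ` ({..<q} \<times> subcube q n p)"
    by (cases x) (auto simp: subcube_def hypercube_def All_less_Suc2)
qed

lemma subcube_Cons_Some:
  "subcube q (Suc n) (Some a # p) = (if a < q then (#) a ` subcube q n p else {})"
proof (rule set_eqI)
  fix x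
  show "x \<in> subcube q (Suc n) (Some a # p) \<longleftrightarrow> x \<in> (if a < q then (#) a ` subcube q n p else {})"
    by (cases x) (auto simp: subcube_def hypercube_def All_less_Suc2)
qed

lemma subcube_dim_eq_length_filter:
  "length p = n \<Longrightarrow> subcube_dim n p = length (filter (\<lambda>z. z = None) p)"
  by (simp add: subcube_dim_def length_filter_conv_card)

lemma card_subcube:
  assumes "star_pattern q n p"
  shows "card (subcube q n p) = q ^ subcube_dim n p"
  using assms
proof (induction p arbitrary: n)
  case Nil
  then have "subcube q n [] = {[]}"
    by (auto simp: star_pattern_def subcube_def hypercube_def)
  then show ?case
    using Nil by (simp add: star_pattern_def subcube_dim_def)
next
  case (Cons z p)
  then obtain m where n: "n = Suc m" and sp: "star_pattern q m p"
    by (auto simp: star_pattern_def All_less_Suc2)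
  have IH: "card (subcube q m p) = q ^ length (filter (\<lambda>z. z = None) p)"
    using Cons.IH[OF sp] sp by (simp add: star_pattern_def subcube_dim_eq_length_filter)
  have dim: "subcube_dim (Suc m) (z # p) = length (filter (\<lambda>z. z = None) (z # p))"
    using Cons.prems n by (simp add: star_pattern_def subcube_dim_eq_length_filter)
  show ?case
  proof (cases z)
    case None
    have "inj_on (\<lambda>(c, x). c # x) ({..<q} \<times> subcube q m p)"
      by (auto simp: inj_on_def)
    then show ?thesis
      using IH dim by (simp add: n None subcube_Cons_None card_image card_cartesian_product)
  next
    case (Some a)
    have "a < q"
      using Cons.prems by (auto simp: star_pattern_def Some)
    then show ?thesis
      using IH dim by (simp add: n Some subcube_Cons_Some card_image)
  qed
qed

lemma star_pattern_update:
  "star_pattern q n p \<Longrightarrow> c < q \<Longrightarrow> star_pattern q n (p[i := Some c])"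
  unfolding star_pattern_def by (metis length_list_update nth_list_update_eq nth_list_update_neq option.inject)

lemma subcube_dim_update_None:
  assumes "i < n" "length p = n" "p ! i = None"
  shows "subcube_dim n (p[i := Some c]) = subcube_dim n p - 1"
proof -
  have "{j. j < n \<and> p[i := Some c] ! j = None} = {j. j < n \<and> p ! j = None} - {i}"
    using assms by (auto simp: nth_list_update)
  then show ?thesis
    using assms by (simp add: subcube_dim_def)
qed

lemma card_subcube_Int_slice:
  assumes "star_pattern q n p" "i < n" "c < q"
  shows "card (subcube q n p \<inter> {x \<in> hypercube q n. x ! i = c}) =
    (case p ! i of None \<Rightarrow> q ^ (subcube_dim n p - 1)
                 | Some a \<Rightarrow> if a = c then q ^ subcube_dim n p else 0)"
proof (cases "p ! i")
  case None
  have len: "length p = n"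
    using assms(1) by (simp add: star_pattern_def)
  have "subcube q n p \<inter> {x \<in> hypercube q n. x ! i = c} = subcube q n (p[i := Some c])"
    using None assms(2) len by (auto simp: subcube_def nth_list_update)
  then show ?thesis
    using card_subcube[OF star_pattern_update[OF assms(1,3)]]
      subcube_dim_update_None[OF assms(2) len None] None by simp
next
  case (Some a)
  have "subcube q n p \<inter> {x \<in> hypercube q n. x ! i = c} = (if a = c then subcube q n p else {})"
    using Some assms(2) by (auto simp: subcube_def)
  then show ?thesis
    using Some card_subcube[OF assms(1)] by simp
qed

lemma card_hypercube_slice:
  assumes "i < n" "c < q"
  shows "card {x \<in> hypercube q n. x ! i = c} = q ^ (n - 1)"
proof -
  let ?p = "(replicate n None)[i := Some c]"
  have "{x \<in> hypercube q n. x ! i = c} = subcube q n ?p"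
    using assms by (auto simp: subcube_def nth_list_update)
  moreover have "star_pattern q n ?p"
    using assms by (auto simp: star_pattern_def nth_list_update)
  moreover have "subcube_dim n (replicate n None) = n"
    by (simp add: subcube_dim_def cong: conj_cong)
  ultimately show ?thesis
    using card_subcube subcube_dim_update_None[of i n "replicate n None" c] assms(1) by simp
qed

lemma card_eq_sum_card_Int_subcubes:
  assumes "is_star_matrix_of_partition q n P" "S \<subseteq> hypercube q n"
  shows "card S = (\<Sum>p\<in>P. card (subcube q n p \<inter> S))"
proof -
  have fin: "finite P" and cover: "\<And>x. x \<in> hypercube q n \<Longrightarrow> \<exists>!p. p \<in> P \<and> x \<in> subcube q n p"
    using assms(1) by (auto simp: is_star_matrix_of_partition_def)
  have "S \<subseteq> (\<Union>p\<in>P. subcube q n p \<inter> S)"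
  proof
    fix x
    assume "x \<in> S"
    moreover obtain p where "p \<in> P" "x \<in> subcube q n p"
      using cover \<open>x \<in> S\<close> assms(2) by blast
    ultimately show "x \<in> (\<Union>p\<in>P. subcube q n p \<inter> S)"
      by blast
  qed
  then have "S = (\<Union>p\<in>P. subcube q n p \<inter> S)"
    by blast
  also have "card \<dots> = (\<Sum>p\<in>P. card (subcube q n p \<inter> S))"
  proof (rule card_UN_disjoint[OF fin])
    show "\<forall>p\<in>P. finite (subcube q n p \<inter> S)"
      using finite_subset[OF subcube_subset_hypercube finite_hypercube] by blast
    show "\<forall>p\<in>P. \<forall>p'\<in>P. p \<noteq> p' \<longrightarrow> (subcube q n p \<inter> S) \<inter> (subcube q n p' \<inter> S) = {}"
    proof (intro ballI impI)
      fix p p'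
      assume "p \<in> P" "p' \<in> P" "p \<noteq> p'"
      have "x \<notin> subcube q n p \<inter> subcube q n p'" for x
        using cover[of x] subcube_subset_hypercube \<open>p \<in> P\<close> \<open>p' \<in> P\<close> \<open>p \<noteq> p'\<close> by blast
      then show "(subcube q n p \<inter> S) \<inter> (subcube q n p' \<inter> S) = {}"
        by blast
    qed
  qed
  finally show ?thesis .
qed

lemma card_hypercube_slice_by_patterns:
  assumes part: "is_star_matrix_of_partition q n P"
    and dim: "\<forall>p\<in>P. subcube_dim n p = d"
    and "i < n" "c < q"
  shows "q ^ (n - 1) = card {p \<in> P. p ! i = None} * q ^ (d - 1) + card {p \<in> P. p ! i = Some c} * q ^ d"
proof -
  have fin: "finite P" and sp: "\<And>p. p \<in> P \<Longrightarrow> star_pattern q n p"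
    using part by (auto simp: is_star_matrix_of_partition_def)
  let ?slice = "{x \<in> hypercube q n. x ! i = c}"
  have "q ^ (n - 1) = card ?slice"
    using card_hypercube_slice[OF assms(3,4)] by simp
  also have "\<dots> = (\<Sum>p\<in>P. card (subcube q n p \<inter> ?slice))"
    by (rule card_eq_sum_card_Int_subcubes[OF part]) auto
  also have "\<dots> = (\<Sum>p\<in>P. (if p ! i = None then q ^ (d - 1) else 0) + (if p ! i = Some c then q ^ d else 0))"
  proof (rule sum.cong[OF refl])
    fix p
    assume "p \<in> P"
    then show "card (subcube q n p \<inter> ?slice) =
      (if p ! i = None then q ^ (d - 1) else 0) + (if p ! i = Some c then q ^ d else 0)"
      using card_subcube_Int_slice[OF sp assms(3,4), of p] dim by (cases "p ! i") auto
  qed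
  also have "\<dots> = card {p \<in> P. p ! i = None} * q ^ (d - 1) + card {p \<in> P. p ! i = Some c} * q ^ d"
    using fin by (simp add: sum.distrib flip: sum.inter_filter)
  finally show ?thesis .
qed

theorem lemma2:
  fixes q n :: nat and P :: "nat option list set" and d :: nat
  assumes "q \<ge> 2"
    and "is_star_matrix_of_partition q n P"
    and "\<forall>p\<in>P. subcube_dim n p = d"
  shows "\<forall>i<n. \<forall>a<q. \<forall>b<q.
           card {p \<in> P. p ! i = Some a} = card {p \<in> P. p ! i = Some b}"
proof (intro allI impI)
  fix i a b
  assume "i < n" "a < q" "b < q"
  then show "card {p \<in> P. p ! i = Some a} = card {p \<in> P. p ! i = Some b}"
    using card_hypercube_slice_by_patterns[OF assms(2,3), of i a]
      card_hypercube_slice_by_patterns[OF assms(2,3), of i b] assms(1) by simp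
qed

end
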